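(* Let $G=(V,E)$ be a connected graph with positive edge costs $c:E\to\mathbb{R}_+$, let $\alpha\ge1$, and let $(U,\complement{U})$ be an $\alpha$-approximate minimum cut of $G$. Then there exists a subset $T\subseteq\complement{U}$ with $|T|\le\lfloor2\alpha\rfloor+1$ such that $(U,\complement{U})$ is the unique minimum $(U,T)$-terminal cut.
   Context: A cut is a partition of $V$ into two non-empty parts; for $\emptyset\ne U\subsetneq V$ write $\complement{U}=V\setminus U$ and $d(U)$ for the total cost of edges with exactly one endpoint in $U$. Let $\lambda=\min\{d(U):\emptyset\ne U\subsetneq V\}$; $(U,\complement{U})$ is an $\alpha$-approximate minimum cut if $d(U)\le\alpha\lambda$. For disjoint non-empty $S,T\subseteq V$, a cut $(X,\complement{X})$ is an $(S,T)$-terminal cut if $S\subseteq X\subseteq V\setminus T$; a minimum $(S,T)$-terminal cut is one minimizing $d(X)$ among these. *)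

theory Defs
  imports Complex_Main
begin

definition graph :: "'a set \<Rightarrow> 'a set set \<Rightarrow> bool" where
  "graph V E \<longleftrightarrow> finite V \<and> (\<forall>e\<in>E. e \<subseteq> V \<and> card e = 2)"

definition adj :: "'a set set \<Rightarrow> ('a \<times> 'a) set" where
  "adj E = {(u, v). {u, v} \<in> E}"

definition connected_graph :: "'a set \<Rightarrow> 'a set set \<Rightarrow> bool" where
  "connected_graph V E \<longleftrightarrow> graph V E \<and> V \<noteq> {} \<and>
     (\<forall>u\<in>V. \<forall>v\<in>V. (u, v) \<in> (adj E)\<^sup>*)"

definition cut_cost :: "'a set set \<Rightarrow> ('a set \<Rightarrow> real) \<Rightarrow> 'a set \<Rightarrow> real" where
  "cut_cost E c U = (\<Sum>e\<in>{e\<in>E. card (e \<inter> U) = 1}. c e)"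

definition is_cut :: "'a set \<Rightarrow> 'a set \<Rightarrow> bool" where
  "is_cut V U \<longleftrightarrow> U \<noteq> {} \<and> U \<subset> V"

definition min_cut_value :: "'a set \<Rightarrow> 'a set set \<Rightarrow> ('a set \<Rightarrow> real) \<Rightarrow> real" where
  "min_cut_value V E c = Min {cut_cost E c U | U. is_cut V U}"

definition approx_min_cut ::
  "'a set \<Rightarrow> 'a set set \<Rightarrow> ('a set \<Rightarrow> real) \<Rightarrow> real \<Rightarrow> 'a set \<Rightarrow> bool" where
  "approx_min_cut V E c \<alpha> U \<longleftrightarrow> is_cut V U \<and> cut_cost E c U \<le> \<alpha> * min_cut_value V E c"

definition terminal_cut :: "'a set \<Rightarrow> 'a set \<Rightarrow> 'a set \<Rightarrow> 'a set \<Rightarrow> bool" where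
  "terminal_cut V S T X \<longleftrightarrow> is_cut V X \<and> S \<subseteq> X \<and> X \<subseteq> V - T"

definition unique_min_terminal_cut ::
  "'a set \<Rightarrow> 'a set set \<Rightarrow> ('a set \<Rightarrow> real) \<Rightarrow> 'a set \<Rightarrow> 'a set \<Rightarrow> 'a set \<Rightarrow> bool" where
  "unique_min_terminal_cut V E c S T X \<longleftrightarrow>
     S \<noteq> {} \<and> T \<noteq> {} \<and> S \<inter> T = {} \<and> S \<subseteq> V \<and> T \<subseteq> V \<and>
     terminal_cut V S T X \<and>
     (\<forall>Y. terminal_cut V S T Y \<and> Y \<noteq> X \<longrightarrow> cut_cost E c X < cut_cost E c Y)"

end

theory Submission
  imports Defs
begin

text \<open>Let \<open>T \<subseteq> V - U\<close> be of minimum cardinality such that \<open>U\<close> is the unique minimum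
  \<open>(U,T)\<close>-terminal cut (\<open>T = V - U\<close> qualifies) and fix \<open>t\<^sub>0 \<in> T\<close>. By minimality, every other
  terminal \<open>s\<close> is isolated by a set \<open>Y\<^sub>s \<supseteq> U\<close> with \<open>Y\<^sub>s \<inter> T = {s}\<close> and \<open>d(Y\<^sub>s) \<le> d(U)\<close>.
  Let \<open>m(v)\<close> count the \<open>Y\<^sub>s\<close> containing \<open>v\<close> and \<open>n = |T| - 1\<close>. Uncrossing, the level sets
  \<open>{m \<ge> j}\<close>, \<open>3 \<le> j \<le> n\<close>, together with the private parts \<open>{v \<in> Y\<^sub>s. m(v) = 1}\<close> cost at most
  \<open>\<Sum>\<^sub>s d(Y\<^sub>s) \<le> n d(U)\<close>. The level sets are \<open>(U,T)\<close>-terminal cuts and the private parts are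
  cuts, so \<open>(n - 2) d(U) + n \<lambda> \<le> n d(U)\<close>, i.e. \<open>n \<lambda> \<le> 2 d(U) \<le> 2 \<alpha> \<lambda>\<close>.\<close>

lemma card_Int_doubleton_eq_1_iff:
  assumes "x \<noteq> y"
  shows "card ({x, y} \<inter> X) = 1 \<longleftrightarrow> (x \<in> X) \<noteq> (y \<in> X)"
  using assms by (cases "x \<in> X"; cases "y \<in> X") (auto simp: Int_insert_left)

lemma graph_finite_edges: "graph V E \<Longrightarrow> finite E"
  unfolding graph_def by (meson Pow_iff finite_Pow_iff finite_subset subsetI)

lemma cut_cost_nonneg: "\<forall>e\<in>E. 0 \<le> c e \<Longrightarrow> 0 \<le> cut_cost E c X"
  unfolding cut_cost_def by (intro sum_nonneg) auto

lemma sum_cut_cost_eq_crossing_count: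
  assumes "finite E" "finite I"
  shows "(\<Sum>i\<in>I. cut_cost E c (F i)) = (\<Sum>e\<in>E. c e * card {i\<in>I. card (e \<inter> F i) = 1})"
proof -
  have "(\<Sum>i\<in>I. cut_cost E c (F i)) = (\<Sum>i\<in>I. \<Sum>e\<in>E. if card (e \<inter> F i) = 1 then c e else 0)"
    unfolding cut_cost_def using assms(1) by (simp add: sum.inter_filter)
  also have "\<dots> = (\<Sum>e\<in>E. \<Sum>i\<in>I. if card (e \<inter> F i) = 1 then c e else 0)"
    by (rule sum.swap)
  also have "\<dots> = (\<Sum>e\<in>E. c e * card {i\<in>I. card (e \<inter> F i) = 1})"
    using assms(2) by (simp add: sum.inter_filter[symmetric] mult.commute)
  finally show ?thesis .
qed

text \<open>Per-edge form of the uncrossing inequality below: for an edge \<open>{x, y}\<close>, \<open>a\<close> and \<open>b\<close>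
  are the indices \<open>s\<close> with \<open>x \<in> Y s\<close>, resp. \<open>y \<in> Y s\<close>.\<close>

lemma level_and_singleton_crossings_le_ordered:
  assumes S: "finite S" and ab: "a \<subseteq> S" "b \<subseteq> S" and le: "card a \<le> card b"
  shows "card {j\<in>{3..card S}. (j \<le> card a) \<noteq> (j \<le> card b)}
       + card {t\<in>S. (t \<in> a \<and> card a = 1) \<noteq> (t \<in> b \<and> card b = 1)}
       \<le> card {t\<in>S. (t \<in> a) \<noteq> (t \<in> b)}"
proof (cases "card a = 1 \<and> card b = 1")
  case True
  then show ?thesis by simp
next
  case False
  have "card b - card a \<le> card (b - a)"
    using S ab by (intro diff_card_le_card_Diff) (auto intro: finite_subset)
  also have "\<dots> \<le> card {t\<in>S. (t \<in> a) \<noteq> (t \<in> b)}"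
    using S ab by (intro card_mono) auto
  finally have sym_diff: "card b - card a \<le> card {t\<in>S. (t \<in> a) \<noteq> (t \<in> b)}" .
  have "{j\<in>{3..card S}. (j \<le> card a) \<noteq> (j \<le> card b)} \<subseteq> {Suc (max (card a) 2)..card b}"
    using le by auto
  then have levels: "card {j\<in>{3..card S}. (j \<le> card a) \<noteq> (j \<le> card b)} \<le> card b - max (card a) 2"
    using card_mono[of "{Suc (max (card a) 2)..card b}"] by fastforce
  have "{t\<in>S. (t \<in> a \<and> card a = 1) \<noteq> (t \<in> b \<and> card b = 1)}
      = (if card a = 1 then a else if card b = 1 then b else {})"
    using False ab by auto
  then have singletons: "card {t\<in>S. (t \<in> a \<and> card a = 1) \<noteq> (t \<in> b \<and> card b = 1)}
      \<le> (if card a = 1 \<or> card b = 1 then 1 else 0)"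
    by auto
  have "card b - max (card a) 2 + (if card a = 1 \<or> card b = 1 then 1 else 0) \<le> card b - card a"
    using False le by auto
  then show ?thesis using sym_diff levels singletons by linarith
qed

lemma level_and_singleton_crossings_le:
  assumes "finite S" "a \<subseteq> S" "b \<subseteq> S"
  shows "card {j\<in>{3..card S}. (j \<le> card a) \<noteq> (j \<le> card b)}
       + card {t\<in>S. (t \<in> a \<and> card a = 1) \<noteq> (t \<in> b \<and> card b = 1)}
       \<le> card {t\<in>S. (t \<in> a) \<noteq> (t \<in> b)}"
proof (cases "card a \<le> card b")
  case True
  then show ?thesis using level_and_singleton_crossings_le_ordered assms by blast
next
  case False
  have swap: "(P \<noteq> Q) = (Q \<noteq> P)" for P Q :: bool
    by blast
  from False have "card b \<le> card a"
    by simp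
  with assms show ?thesis
    using level_and_singleton_crossings_le_ordered[of S b a] by (simp only: swap)
qed

definition cover_count :: "'b set \<Rightarrow> ('b \<Rightarrow> 'a set) \<Rightarrow> 'a \<Rightarrow> nat" where
  "cover_count S Y v = card {s\<in>S. v \<in> Y s}"

lemma uncrossing_levels_private_parts:
  assumes E: "finite E" "\<forall>e\<in>E. card e = 2" and c: "\<forall>e\<in>E. 0 \<le> c e" and S: "finite S"
  shows "(\<Sum>j\<in>{3..card S}. cut_cost E c {v. j \<le> cover_count S Y v})
       + (\<Sum>s\<in>S. cut_cost E c {v \<in> Y s. cover_count S Y v = 1})
       \<le> (\<Sum>s\<in>S. cut_cost E c (Y s))"
proof -
  have crossings: "card {j\<in>{3..card S}. card (e \<inter> {v. j \<le> cover_count S Y v}) = 1}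
      + card {s\<in>S. card (e \<inter> {v \<in> Y s. cover_count S Y v = 1}) = 1}
      \<le> card {s\<in>S. card (e \<inter> Y s) = 1}" if "e \<in> E" for e
  proof -
    obtain x y where e: "e = {x, y}" "x \<noteq> y"
      using E \<open>e \<in> E\<close> by (metis card_2_iff)
    define a b where "a = {s\<in>S. x \<in> Y s}" and "b = {s\<in>S. y \<in> Y s}"
    have cover: "cover_count S Y x = card a" "cover_count S Y y = card b"
      unfolding cover_count_def a_def b_def by simp_all
    have "{j\<in>{3..card S}. card (e \<inter> {v. j \<le> cover_count S Y v}) = 1}
        = {j\<in>{3..card S}. (j \<le> card a) \<noteq> (j \<le> card b)}"
      unfolding e(1) card_Int_doubleton_eq_1_iff[OF e(2)] using cover by auto
    moreover have "{s\<in>S. card (e \<inter> {v \<in> Y s. cover_count S Y v = 1}) = 1}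
        = {s\<in>S. (s \<in> a \<and> card a = 1) \<noteq> (s \<in> b \<and> card b = 1)}"
      unfolding e(1) card_Int_doubleton_eq_1_iff[OF e(2)] using cover by (auto simp: a_def b_def)
    moreover have "{s\<in>S. card (e \<inter> Y s) = 1} = {s\<in>S. (s \<in> a) \<noteq> (s \<in> b)}"
      unfolding e(1) card_Int_doubleton_eq_1_iff[OF e(2)] by (auto simp: a_def b_def)
    ultimately show ?thesis
      using level_and_singleton_crossings_le[OF S, of a b] by (simp add: a_def b_def)
  qed
  have "(\<Sum>j\<in>{3..card S}. cut_cost E c {v. j \<le> cover_count S Y v})
       + (\<Sum>s\<in>S. cut_cost E c {v \<in> Y s. cover_count S Y v = 1})
     = (\<Sum>e\<in>E. c e * (card {j\<in>{3..card S}. card (e \<inter> {v. j \<le> cover_count S Y v}) = 1}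
                       + card {s\<in>S. card (e \<inter> {v \<in> Y s. cover_count S Y v = 1}) = 1}))"
    using E S by (simp add: sum_cut_cost_eq_crossing_count sum.distrib distrib_left)
  also have "\<dots> \<le> (\<Sum>e\<in>E. c e * card {s\<in>S. card (e \<inter> Y s) = 1})"
    using c crossings by (intro sum_mono mult_left_mono) (auto simp flip: of_nat_add)
  also have "\<dots> = (\<Sum>s\<in>S. cut_cost E c (Y s))"
    using E S by (simp add: sum_cut_cost_eq_crossing_count)
  finally show ?thesis .
qed

lemma finite_cut_costs: "finite V \<Longrightarrow> finite {cut_cost E c U | U. is_cut V U}"
proof -
  assume "finite V"
  moreover have "{cut_cost E c U | U. is_cut V U} \<subseteq> cut_cost E c ` Pow V"
    unfolding is_cut_def by auto
  ultimately show ?thesis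
    by (meson finite_Pow_iff finite_imageI finite_subset)
qed

lemma min_cut_value_le:
  assumes "graph V E" "is_cut V X"
  shows "min_cut_value V E c \<le> cut_cost E c X"
  using assms finite_cut_costs[of V E c] unfolding min_cut_value_def graph_def
  by (intro Min_le) auto

lemma connected_graph_crossing_edge:
  assumes conn: "connected_graph V E" and X: "is_cut V X"
  shows "\<exists>e\<in>E. card (e \<inter> X) = 1"
proof -
  obtain x y where "x \<in> X" "x \<in> V" "y \<in> V" "y \<notin> X"
    using X unfolding is_cut_def by blast
  then have "(x, y) \<in> (adj E)\<^sup>*" "x \<in> X" "y \<notin> X"
    using conn unfolding connected_graph_def by auto
  then show ?thesis
  proof (induction rule: rtrancl_induct)
    case base
    then show ?case
      by simp
  next
    case (step z z')
    show ?case
    proof (cases "z \<in> X")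
      case True
      have "{z, z'} \<in> E" "z \<noteq> z'"
        using step.hyps(2) step.prems True unfolding adj_def by auto
      moreover have "card ({z, z'} \<inter> X) = 1"
        using card_Int_doubleton_eq_1_iff[OF \<open>z \<noteq> z'\<close>] True step.prems by simp
      ultimately show ?thesis
        by blast
    next
      case False
      then show ?thesis
        using step.IH step.prems by simp
    qed
  qed
qed

lemma min_cut_value_pos:
  assumes conn: "connected_graph V E" and c: "\<forall>e\<in>E. c e > 0" and U: "is_cut V U"
  shows "0 < min_cut_value V E c"
proof -
  have G: "graph V E"
    using conn unfolding connected_graph_def by simp
  have "min_cut_value V E c \<in> {cut_cost E c U | U. is_cut V U}"
    unfolding min_cut_value_def using finite_cut_costs G U unfolding graph_def
    by (intro Min_in) auto
  then obtain X where X: "is_cut V X" "min_cut_value V E c = cut_cost E c X"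
    by blast
  then obtain e where e: "e \<in> E" "card (e \<inter> X) = 1"
    using connected_graph_crossing_edge conn by blast
  have "0 < c e"
    using c e by simp
  also have "c e \<le> cut_cost E c X"
    unfolding cut_cost_def using e c graph_finite_edges[OF G]
    by (intro member_le_sum) auto
  finally show ?thesis
    using X by simp
qed

lemma unique_min_terminal_cut_complement:
  "is_cut V U \<Longrightarrow> unique_min_terminal_cut V E c U (V - U) U"
  unfolding unique_min_terminal_cut_def terminal_cut_def is_cut_def by auto

lemma exists_isolating_cut:
  assumes unique: "unique_min_terminal_cut V E c U T U" and s: "s \<in> T" "T - {s} \<noteq> {}"
    and not_unique: "\<not> unique_min_terminal_cut V E c U (T - {s}) U"
  shows "\<exists>Y. U \<subseteq> Y \<and> Y \<subseteq> V \<and> Y \<inter> T = {s} \<and> cut_cost E c Y \<le> cut_cost E c U"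
proof -
  obtain Y where Y: "terminal_cut V U (T - {s}) Y" "Y \<noteq> U" "cut_cost E c Y \<le> cut_cost E c U"
    using unique not_unique s unfolding unique_min_terminal_cut_def terminal_cut_def
    by (auto simp: not_less)
  have "s \<in> Y"
  proof (rule ccontr)
    assume "s \<notin> Y"
    then have "terminal_cut V U T Y"
      using Y(1) unfolding terminal_cut_def by auto
    then show False
      using Y unique unfolding unique_min_terminal_cut_def by fastforce
  qed
  then show ?thesis
    using Y s unfolding terminal_cut_def is_cut_def by blast
qed

lemma card_isolating_cuts_bound:
  assumes G: "graph V E" and c: "\<forall>e\<in>E. 0 \<le> c e"
    and U_min: "\<And>X. terminal_cut V U T X \<Longrightarrow> cut_cost E c U \<le> cut_cost E c X"
    and U: "U \<noteq> {}" and T: "T \<subseteq> V - U" and t0: "t0 \<in> T" "t0 \<notin> S" and S: "S \<subseteq> T"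
    and Y_U: "\<And>s. s \<in> S \<Longrightarrow> U \<subseteq> Y s" and Y_V: "\<And>s. s \<in> S \<Longrightarrow> Y s \<subseteq> V"
    and Y_T: "\<And>s. s \<in> S \<Longrightarrow> Y s \<inter> T = {s}"
    and Y_cost: "\<And>s. s \<in> S \<Longrightarrow> cut_cost E c (Y s) \<le> cut_cost E c U"
  shows "card S * min_cut_value V E c \<le> 2 * cut_cost E c U"
proof -
  define D where "D = cut_cost E c U"
  define n where "n = card S"
  define m where "m = cover_count S Y"
  have "finite V"
    using G unfolding graph_def by simp
  moreover have "S \<subseteq> V"
    using S T by blast
  ultimately have fin: "finite E" "finite S"
    using graph_finite_edges[OF G] finite_subset by auto
  have m_U: "m u = n" if "u \<in> U" for u
  proof -
    have "{s\<in>S. u \<in> Y s} = S"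
      using that Y_U by auto
    then show ?thesis
      unfolding m_def n_def cover_count_def by simp
  qed
  have m_S: "m s = 1" if s: "s \<in> S" for s
  proof -
    have "s \<in> Y s' \<longleftrightarrow> s' = s" if "s' \<in> S" for s'
      using Y_T[OF that] Y_T[OF s] S s by auto
    then have "{s'\<in>S. s \<in> Y s'} = {s}"
      using s by auto
    then show ?thesis
      unfolding m_def cover_count_def by simp
  qed
  have m_T: "m t = 0" if t: "t \<in> T - S" for t
  proof -
    have "t \<notin> Y s" if "s \<in> S" for s
      using Y_T[OF that] t that by (metis DiffE IntI singletonD)
    then have "{s\<in>S. t \<in> Y s} = {}"
      by auto
    then show ?thesis
      unfolding m_def cover_count_def by (simp only: card.empty)
  qed
  have m_V: "v \<in> V" if pos: "0 < m v" for v
  proof -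
    have "{s\<in>S. v \<in> Y s} \<noteq> {}"
      using pos unfolding m_def cover_count_def by (metis card.empty less_irrefl)
    then obtain s where "s \<in> S" "v \<in> Y s"
      by blast
    then show ?thesis
      using Y_V by auto
  qed
  have levels: "D \<le> cut_cost E c {v. j \<le> m v}" if j: "j \<in> {3..n}" for j
  proof -
    have "{v. j \<le> m v} \<inter> T = {}"
      using j m_S m_T by fastforce
    moreover have "U \<subseteq> {v. j \<le> m v}" "{v. j \<le> m v} \<subseteq> V"
      using j m_U m_V by auto
    ultimately have "terminal_cut V U T {v. j \<le> m v}"
      using U T t0 unfolding terminal_cut_def is_cut_def by blast
    then show ?thesis
      using U_min unfolding D_def by blast
  qed
  have private_parts: "min_cut_value V E c \<le> cut_cost E c {v \<in> Y s. m v = 1}" if "s \<in> S" for s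
  proof (rule min_cut_value_le[OF G])
    have "s \<in> {v \<in> Y s. m v = 1}"
      using Y_T[OF that] m_S[OF that] by blast
    moreover have "t0 \<in> V - {v \<in> Y s. m v = 1}"
      using m_T t0 T by auto
    ultimately show "is_cut V {v \<in> Y s. m v = 1}"
      using Y_V[OF that] unfolding is_cut_def by blast
  qed
  have "real (card {3..n}) * D + real n * min_cut_value V E c
      \<le> (\<Sum>j\<in>{3..n}. cut_cost E c {v. j \<le> m v}) + (\<Sum>s\<in>S. cut_cost E c {v \<in> Y s. m v = 1})"
    unfolding n_def using levels private_parts
    by (intro add_mono sum_bounded_below) (auto simp: n_def)
  also have "\<dots> \<le> (\<Sum>s\<in>S. cut_cost E c (Y s))"
    unfolding n_def m_def using uncrossing_levels_private_parts fin G c unfolding graph_def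
    by blast
  also have "\<dots> \<le> real n * D"
    unfolding n_def D_def using Y_cost by (intro sum_bounded_above) auto
  finally have "real (card {3..n}) * D + real n * min_cut_value V E c \<le> real n * D" .
  moreover have "(real n - 2) * D \<le> real (card {3..n}) * D"
    using cut_cost_nonneg[OF c] unfolding D_def by (intro mult_right_mono) auto
  ultimately show ?thesis
    unfolding n_def D_def by (simp add: algebra_simps)
qed

lemma card_minimum_terminal_set_bound:
  assumes G: "graph V E" and c: "\<forall>e\<in>E. 0 \<le> c e" and U: "U \<noteq> {}"
    and T: "T \<subseteq> V - U" "unique_min_terminal_cut V E c U T U"
    and T_least: "\<And>T'. T' \<subseteq> V - U \<Longrightarrow> unique_min_terminal_cut V E c U T' U \<Longrightarrow> card T \<le> card T'"
  shows "(real (card T) - 1) * min_cut_value V E c \<le> 2 * cut_cost E c U"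
proof -
  have "finite T"
    using T(1) G unfolding graph_def by (auto intro: finite_subset)
  obtain t0 where t0: "t0 \<in> T"
    using T(2) unfolding unique_min_terminal_cut_def by blast
  have "\<exists>Y. U \<subseteq> Y \<and> Y \<subseteq> V \<and> Y \<inter> T = {s} \<and> cut_cost E c Y \<le> cut_cost E c U"
    if s: "s \<in> T - {t0}" for s
  proof (rule exists_isolating_cut[OF T(2)])
    show "\<not> unique_min_terminal_cut V E c U (T - {s}) U"
      using T_least[of "T - {s}"] T(1) card_Diff1_less[OF \<open>finite T\<close>] s by fastforce
  qed (use s t0 in auto)
  then obtain Y where Y: "\<And>s. s \<in> T - {t0} \<Longrightarrow>
      U \<subseteq> Y s \<and> Y s \<subseteq> V \<and> Y s \<inter> T = {s} \<and> cut_cost E c (Y s) \<le> cut_cost E c U"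
    by metis
  have U_min: "cut_cost E c U \<le> cut_cost E c X" if "terminal_cut V U T X" for X
    using T(2) that unfolding unique_min_terminal_cut_def by (cases "X = U") auto
  have "card (T - {t0}) * min_cut_value V E c \<le> 2 * cut_cost E c U"
    by (rule card_isolating_cuts_bound[OF G c U_min U T(1) t0, where S = "T - {t0}" and Y = Y])
      (simp_all add: Y)
  moreover have "real (card (T - {t0})) = real (card T) - 1"
    using card_Suc_Diff1[OF \<open>finite T\<close> t0] by simp
  ultimately show ?thesis
    by simp
qed

theorem corollary2p4:
  fixes V :: "'a set" and E :: "'a set set" and c :: "'a set \<Rightarrow> real"
    and \<alpha> :: real and U :: "'a set"
  assumes "connected_graph V E"
    and "\<forall>e\<in>E. c e > 0"
    and "\<alpha> \<ge> 1"
    and "approx_min_cut V E c \<alpha> U"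
  shows "\<exists>T. T \<subseteq> V - U \<and> int (card T) \<le> \<lfloor>2 * \<alpha>\<rfloor> + 1 \<and>
             unique_min_terminal_cut V E c U T U"
proof -
  have G: "graph V E" and c: "\<forall>e\<in>E. 0 \<le> c e"
    using assms(1,2) unfolding connected_graph_def by (auto simp: less_imp_le)
  have U: "is_cut V U" and approx: "cut_cost E c U \<le> \<alpha> * min_cut_value V E c"
    using assms(4) unfolding approx_min_cut_def by auto
  have "\<exists>T. (T \<subseteq> V - U \<and> unique_min_terminal_cut V E c U T U) \<and>
      (\<forall>T'. T' \<subseteq> V - U \<and> unique_min_terminal_cut V E c U T' U \<longrightarrow> card T \<le> card T')"
    using unique_min_terminal_cut_complement[OF U] by (intro ex_has_least_nat[of _ "V - U"]) simp
  then obtain T where T: "T \<subseteq> V - U" "unique_min_terminal_cut V E c U T U"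
    and T_least: "\<And>T'. T' \<subseteq> V - U \<Longrightarrow> unique_min_terminal_cut V E c U T' U \<Longrightarrow> card T \<le> card T'"
    by auto
  have "U \<noteq> {}"
    using U unfolding is_cut_def by simp
  then have "(real (card T) - 1) * min_cut_value V E c \<le> \<alpha> * min_cut_value V E c * 2"
    using card_minimum_terminal_set_bound[OF G c _ T T_least] approx by simp
  then have "real (card T) - 1 \<le> 2 * \<alpha>"
    using min_cut_value_pos[OF assms(1,2) U] by simp
  then have "int (card T) - 1 \<le> \<lfloor>2 * \<alpha>\<rfloor>"
    by (simp add: le_floor_iff)
  then show ?thesis
    using T by (intro exI[of _ T]) simp
qed

end
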